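(* An $L$-layer RNN with $H$ heads, hidden dimension $m$ and precision $p$ cannot solve the permutation composition task $\mathsf{PerCom}$ on $[n]$ whenever $LHmp<\log(n!)$. The same holds for RNNs with chain-of-thought.
   Context: Permutation composition $\mathsf{PerCom}(\sigma,\tau)$: the input consists of two bijections $\sigma,\tau:[n]\to[n]$, given as $n$ tokens $\sigma(1),\dots,\sigma(n)$ followed by $n$ tokens $\tau(1),\dots,\tau(n)$. The required output is the sequence $\sigma(\tau(1)),\dots,\sigma(\tau(n))$. RNN layer (one head) with hidden dimension $m$ and precision $p$: one fixes $\mathrm{h}_0\in\mathbb{R}^m$ and computes $\mathrm{h}_i=g_{(i)}(x_i,\mathrm{h}_{i-1})\in\mathbb{R}^m$ and $y_i=f_{(i)}(x_i,\mathrm{h}_i)$ for arbitrary functions $g_{(i)},f_{(i)}$, with hidden states represented by $p$-bit numbers. An $L$-layer, $H$-head RNN stacks $L$ layers, each of $H$ parallel heads with concatenated outputs, interleaved with arbitrary position-wise maps. With chain-of-thought, the model autoregressively generates additional tokens after the input (each appended as a new position), and the answer is read from them. *)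

theory Defs
  imports Complex_Main
begin

text \<open>
  An RNN with value type 'v (type of the values carried between layers,
  arbitrary) and hidden states given as lists of naturals; a hidden state of
  dimension m and precision p is a list of length m of p-bit numbers,
  i.e. entries in {0..<2^p}.  All positions are 0-indexed.

  Components (layer index l, head index k, position i):
   emb i x          position-wise map applied to the input token x
   h0 l k           initial hidden state
   g l k i x h      hidden state update  h_i = g (x_i, h_{i-1})
   f l k i x h      head output          y_i = f (x_i, h_i)
   phi l i ys       position-wise map applied to the concatenated head outputs
   out i v          position-wise map producing the output token
\<close>

type_synonym hstate = "nat list"

datatype 'v rnn = RNN
  (emb: "nat \<Rightarrow> nat \<Rightarrow> 'v")
  (h0: "nat \<Rightarrow> nat \<Rightarrow> hstate")
  (gupd: "nat \<Rightarrow> nat \<Rightarrow> nat \<Rightarrow> 'v \<Rightarrow> hstate \<Rightarrow> hstate")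
  (fout: "nat \<Rightarrow> nat \<Rightarrow> nat \<Rightarrow> 'v \<Rightarrow> hstate \<Rightarrow> 'v")
  (phi: "nat \<Rightarrow> nat \<Rightarrow> 'v list \<Rightarrow> 'v")
  (out: "nat \<Rightarrow> 'v \<Rightarrow> nat")

definition valid_state :: "nat \<Rightarrow> nat \<Rightarrow> hstate \<Rightarrow> bool" where
  "valid_state m p h \<longleftrightarrow> length h = m \<and> (\<forall>x\<in>set h. x < 2 ^ p)"

definition rnn_wf :: "nat \<Rightarrow> nat \<Rightarrow> nat \<Rightarrow> nat \<Rightarrow> 'v rnn \<Rightarrow> bool" where
  "rnn_wf L H m p M \<longleftrightarrow>
     (\<forall>l<L. \<forall>k<H. valid_state m p (h0 M l k) \<and>
        (\<forall>i x h. valid_state m p h \<longrightarrow> valid_state m p (gupd M l k i x h)))"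

text \<open>hseq g h0 xs i = hidden state after processing positions 0..i-1
  (so the hidden state at position i is hseq g h0 xs (Suc i)).\<close>
primrec hseq :: "(nat \<Rightarrow> 'v \<Rightarrow> hstate \<Rightarrow> hstate) \<Rightarrow> hstate \<Rightarrow> (nat \<Rightarrow> 'v) \<Rightarrow> nat \<Rightarrow> hstate" where
  "hseq g h xs 0 = h"
| "hseq g h xs (Suc i) = g i (xs i) (hseq g h xs i)"

definition layer_apply :: "nat \<Rightarrow> 'v rnn \<Rightarrow> nat \<Rightarrow> (nat \<Rightarrow> 'v) \<Rightarrow> nat \<Rightarrow> 'v" where
  "layer_apply H M l xs i =
     phi M l i (map (\<lambda>k. fout M l k i (xs i) (hseq (gupd M l k) (h0 M l k) xs (Suc i))) [0..<H])"

primrec rnn_vals :: "nat \<Rightarrow> 'v rnn \<Rightarrow> (nat \<Rightarrow> nat) \<Rightarrow> nat \<Rightarrow> nat \<Rightarrow> 'v" where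
  "rnn_vals H M tok 0 = (\<lambda>i. emb M i (tok i))"
| "rnn_vals H M tok (Suc l) = layer_apply H M l (rnn_vals H M tok l)"

definition rnn_output :: "nat \<Rightarrow> nat \<Rightarrow> 'v rnn \<Rightarrow> nat list \<Rightarrow> nat \<Rightarrow> nat" where
  "rnn_output L H M xs i = out M i (rnn_vals H M (\<lambda>j. xs ! j) L i)"

primrec cot_seq :: "nat \<Rightarrow> nat \<Rightarrow> 'v rnn \<Rightarrow> nat list \<Rightarrow> nat \<Rightarrow> nat list" where
  "cot_seq L H M xs 0 = xs"
| "cot_seq L H M xs (Suc t) =
     (let s = cot_seq L H M xs t in s @ [rnn_output L H M s (length s - 1)])"

definition perm_n :: "nat \<Rightarrow> (nat \<Rightarrow> nat) \<Rightarrow> bool" where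
  "perm_n n \<sigma> \<longleftrightarrow> bij_betw \<sigma> {1..n} {1..n}"

definition percom_input :: "nat \<Rightarrow> (nat \<Rightarrow> nat) \<Rightarrow> (nat \<Rightarrow> nat) \<Rightarrow> nat list" where
  "percom_input n \<sigma> \<tau> = map \<sigma> [1..<n+1] @ map \<tau> [1..<n+1]"

definition percom_answer :: "nat \<Rightarrow> (nat \<Rightarrow> nat) \<Rightarrow> (nat \<Rightarrow> nat) \<Rightarrow> nat list" where
  "percom_answer n \<sigma> \<tau> = map (\<lambda>j. \<sigma> (\<tau> j)) [1..<n+1]"

text \<open>Without CoT: the answer sigma(tau(j)) is read at the position of tau(j),
  i.e. the (n+j)-th input position (0-indexed n+j-1).\<close>
definition solves_percom :: "nat \<Rightarrow> nat \<Rightarrow> 'v rnn \<Rightarrow> nat \<Rightarrow> bool" where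
  "solves_percom L H M n \<longleftrightarrow>
     (\<forall>\<sigma> \<tau>. perm_n n \<sigma> \<and> perm_n n \<tau> \<longrightarrow>
        map (\<lambda>j. rnn_output L H M (percom_input n \<sigma> \<tau>) (n + j - 1)) [1..<n+1]
          = percom_answer n \<sigma> \<tau>)"

definition solves_percom_cot :: "nat \<Rightarrow> nat \<Rightarrow> 'v rnn \<Rightarrow> nat \<Rightarrow> nat \<Rightarrow> bool" where
  "solves_percom_cot L H M n T \<longleftrightarrow>
     (\<forall>\<sigma> \<tau>. perm_n n \<sigma> \<and> perm_n n \<tau> \<longrightarrow>
        drop (T - n) (drop (2 * n) (cot_seq L H M (percom_input n \<sigma> \<tau>) T))
          = percom_answer n \<sigma> \<tau>)"

end

theory Submission
  imports Defs "HOL-Combinatorics.Permutations" "HOL-Library.FuncSet"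
begin

text \<open>
  After reading the first n tokens, everything the RNN can still use is the tuple of the
  hidden states of its L * H heads at position n, and there are at most 2^(L H m p) such tuples.
  If this is less than n!, two different permutations \<sigma> \<noteq> \<sigma>' lead to the same tuple.
  Appending the same continuation (here \<tau> = id) then yields identical outputs, and identical
  chain-of-thought tokens, at all later positions, although the correct answers \<sigma> and \<sigma>'
  differ.
\<close>

abbreviation head_state :: "nat \<Rightarrow> 'v rnn \<Rightarrow> (nat \<Rightarrow> nat) \<Rightarrow> nat \<Rightarrow> nat \<Rightarrow> nat \<Rightarrow> hstate" where
  "head_state H M tok l k i \<equiv> hseq (gupd M l k) (h0 M l k) (rnn_vals H M tok l) i"

lemma valid_state_hseq:
  assumes "valid_state m p h" "\<And>i x h. valid_state m p h \<Longrightarrow> valid_state m p (g i x h)"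
  shows "valid_state m p (hseq g h xs j)"
  by (induction j) (auto simp: assms)

lemma hseq_cong_prefix:
  "\<forall>j<N. xs j = xs' j \<Longrightarrow> i \<le> N \<Longrightarrow> hseq g h xs i = hseq g h xs' i"
  by (induction i) auto

lemma hseq_cong_suffix:
  assumes "hseq g h xs n = hseq g h xs' n" "\<forall>j\<ge>n. xs j = xs' j" "n \<le> i"
  shows "hseq g h xs i = hseq g h xs' i"
  using assms(3) by (induction i rule: dec_induct) (simp_all add: assms(1,2))

lemma rnn_vals_cong_prefix:
  "\<forall>j<N. tok j = tok' j \<Longrightarrow> i < N \<Longrightarrow> rnn_vals H M tok l i = rnn_vals H M tok' l i"
proof (induction l arbitrary: i)
  case 0
  then show ?case by simp
next
  case (Suc l)
  have vals: "\<forall>j<N. rnn_vals H M tok l j = rnn_vals H M tok' l j"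
    using Suc.IH Suc.prems(1) by blast
  have "head_state H M tok l k (Suc i) = head_state H M tok' l k (Suc i)" for k
    by (rule hseq_cong_prefix[OF vals]) (use Suc.prems(2) in simp)
  then show ?case
    using vals Suc.prems(2) by (simp add: layer_apply_def)
qed

lemma head_state_cong_prefix:
  "\<forall>j<n. tok j = tok' j \<Longrightarrow> head_state H M tok l k n = head_state H M tok' l k n"
  by (rule hseq_cong_prefix[of n]) (simp_all add: rnn_vals_cong_prefix)

lemma rnn_vals_cong_suffix:
  assumes "\<forall>j\<ge>n. tok j = tok' j"
    and "\<forall>l<L. \<forall>k<H. head_state H M tok l k n = head_state H M tok' l k n"
  shows "l \<le> L \<Longrightarrow> n \<le> i \<Longrightarrow> rnn_vals H M tok l i = rnn_vals H M tok' l i"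
proof (induction l arbitrary: i)
  case 0
  then show ?case using assms(1) by simp
next
  case (Suc l)
  have vals: "\<forall>j\<ge>n. rnn_vals H M tok l j = rnn_vals H M tok' l j"
    using Suc.IH Suc.prems(1) by simp
  have "head_state H M tok l k (Suc i) = head_state H M tok' l k (Suc i)" if "k < H" for k
    by (rule hseq_cong_suffix[OF _ vals]) (use Suc.prems assms(2) that in auto)
  then show ?case
    unfolding rnn_vals.simps layer_apply_def
    by (intro arg_cong[where f = "phi M l i"] map_cong) (use vals Suc.prems(2) in auto)
qed

definition states_after :: "nat \<Rightarrow> nat \<Rightarrow> 'v rnn \<Rightarrow> nat list \<Rightarrow> nat \<times> nat \<Rightarrow> hstate" where
  "states_after L H M a =
     restrict (\<lambda>(l, k). head_state H M (\<lambda>j. a ! j) l k (length a)) ({..<L} \<times> {..<H})"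

lemma states_after_eq_head_state:
  assumes "l < L" "k < H"
  shows "states_after L H M a (l, k) = head_state H M (\<lambda>j. (a @ r) ! j) l k (length a)"
  using assms head_state_cong_prefix[of "length a" "\<lambda>j. a ! j" "\<lambda>j. (a @ r) ! j"]
  by (simp add: states_after_def nth_append)

lemma rnn_output_append_cong:
  assumes "states_after L H M a = states_after L H M a'" "length a' = length a"
    and "length a \<le> i"
  shows "rnn_output L H M (a @ r) i = rnn_output L H M (a' @ r) i"
proof -
  let ?n = "length a"
  have "\<forall>j\<ge>?n. (a @ r) ! j = (a' @ r) ! j"
    using assms(2) by (simp add: nth_append)
  moreover have "head_state H M (\<lambda>j. (a @ r) ! j) l k ?n = head_state H M (\<lambda>j. (a' @ r) ! j) l k ?n"
    if "l < L" "k < H" for l k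
  proof -
    have "head_state H M (\<lambda>j. (a @ r) ! j) l k ?n = states_after L H M a (l, k)"
      by (rule states_after_eq_head_state[OF that, symmetric])
    also have "\<dots> = states_after L H M a' (l, k)"
      by (simp only: assms(1))
    also have "\<dots> = head_state H M (\<lambda>j. (a' @ r) ! j) l k ?n"
      unfolding assms(2)[symmetric] by (rule states_after_eq_head_state[OF that])
    finally show ?thesis .
  qed
  ultimately have "rnn_vals H M (\<lambda>j. (a @ r) ! j) L i = rnn_vals H M (\<lambda>j. (a' @ r) ! j) L i"
    using assms(3) by (intro rnn_vals_cong_suffix[where L = L]) blast+
  then show ?thesis
    by (simp add: rnn_output_def)
qed

lemma cot_seq_append_cong:
  assumes "states_after L H M a = states_after L H M a'" "length a' = length a" "r \<noteq> []"
  shows "\<exists>g. cot_seq L H M (a @ r) t = a @ g \<and> cot_seq L H M (a' @ r) t = a' @ g \<and> g \<noteq> []"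
proof (induction t)
  case 0
  then show ?case using assms(3) by simp
next
  case (Suc t)
  then obtain g where g: "cot_seq L H M (a @ r) t = a @ g" "cot_seq L H M (a' @ r) t = a' @ g"
    "g \<noteq> []" by blast
  \<comment> \<open>Since g is nonempty, the position read off in each step lies beyond the prefix.\<close>
  have "length a \<le> length (a @ g) - 1"
    using g(3) by (cases g) auto
  then have "rnn_output L H M (a @ g) (length (a @ g) - 1)
      = rnn_output L H M (a' @ g) (length (a' @ g) - 1)"
    using rnn_output_append_cong[OF assms(1,2)] assms(2) by simp
  then show ?case using g by (simp add: Let_def)
qed

lemma card_valid_states: "card {h. valid_state m p h} = 2 ^ (m * p)"
proof -
  have "{h. valid_state m p h} = {xs. set xs \<subseteq> {..<2 ^ p} \<and> length xs = m}"
    by (auto simp: valid_state_def)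
  then show ?thesis
    by (simp add: card_lists_length_eq) (metis power_mult mult.commute)
qed

lemma card_states_after_image_le:
  assumes "rnn_wf L H m p M"
  shows "card (states_after L H M ` A) \<le> 2 ^ (L * H * m * p)"
proof -
  let ?V = "{h. valid_state m p h}"
  have "finite ?V"
    using card_valid_states[of m p] by (intro card_ge_0_finite) simp
  have "valid_state m p (head_state H M tok l k i)" if "l < L" "k < H" for tok l k i
    using assms that unfolding rnn_wf_def by (intro valid_state_hseq) auto
  then have "states_after L H M a \<in> ({..<L} \<times> {..<H}) \<rightarrow>\<^sub>E ?V" for a
    unfolding states_after_def by (subst restrict_PiE_iff) auto
  then have "states_after L H M ` A \<subseteq> ({..<L} \<times> {..<H}) \<rightarrow>\<^sub>E ?V"
    by blast
  then have "card (states_after L H M ` A) \<le> card (({..<L} \<times> {..<H}) \<rightarrow>\<^sub>E ?V)"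
    using \<open>finite ?V\<close> by (intro card_mono) (simp_all add: finite_PiE)
  also have "\<dots> = 2 ^ (L * H * m * p)"
    by (simp add: card_PiE card_valid_states card_cartesian_product flip: power_mult)
  finally show ?thesis .
qed

lemma inj_on_map_permutes:
  "inj_on (\<lambda>\<sigma>. map \<sigma> [1..<n+1]) {\<sigma>. \<sigma> permutes {1..n}}"
proof (rule inj_onI)
  fix \<sigma> \<sigma>' assume perms: "\<sigma> \<in> {\<sigma>. \<sigma> permutes {1..n}}" "\<sigma>' \<in> {\<sigma>. \<sigma> permutes {1..n}}"
    and "map \<sigma> [1..<n+1] = map \<sigma>' [1..<n+1]"
  then have "\<sigma> x = \<sigma>' x" if "x \<in> {1..n}" for x
    using that by (simp add: map_eq_conv) (auto simp: le_less)
  moreover have "\<sigma> x = \<sigma>' x" if "x \<notin> {1..n}" for x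
    using that perms by (simp add: permutes_not_in)
  ultimately show "\<sigma> = \<sigma>'" by blast
qed

lemma indistinguishable_permutations:
  assumes "rnn_wf L H m p M" "2 ^ (L * H * m * p) < (fact n :: nat)"
  obtains \<sigma> \<sigma>' where "\<sigma> permutes {1..n}" "\<sigma>' permutes {1..n}"
    "map \<sigma> [1..<n+1] \<noteq> map \<sigma>' [1..<n+1]"
    "states_after L H M (map \<sigma> [1..<n+1]) = states_after L H M (map \<sigma>' [1..<n+1])"
proof -
  let ?P = "{\<sigma>. \<sigma> permutes {1..n}}"
  let ?word = "\<lambda>\<sigma>. map \<sigma> [1..<n+1]"
  have "card ?P = fact n"
    by (rule card_permutations) simp_all
  then have "card ((states_after L H M \<circ> ?word) ` ?P) < card ?P"
    using card_states_after_image_le[OF assms(1), of "?word ` ?P"] assms(2)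
    unfolding image_comp by linarith
  then have "\<not> inj_on (states_after L H M \<circ> ?word) ?P"
    by (rule pigeonhole)
  then obtain \<sigma> \<sigma>' where perms: "\<sigma> \<in> ?P" "\<sigma>' \<in> ?P" and "\<sigma> \<noteq> \<sigma>'"
    and "states_after L H M (?word \<sigma>) = states_after L H M (?word \<sigma>')"
    unfolding inj_on_def comp_def by blast
  moreover have "?word \<sigma> \<noteq> ?word \<sigma>'"
    using inj_onD[OF inj_on_map_permutes _ perms] \<open>\<sigma> \<noteq> \<sigma>'\<close> by blast
  ultimately show ?thesis
    using that by blast
qed

lemma solves_percomD:
  "solves_percom L H M n \<Longrightarrow> perm_n n \<sigma> \<Longrightarrow> perm_n n \<tau> \<Longrightarrow>
   map (\<lambda>j. rnn_output L H M (percom_input n \<sigma> \<tau>) (n + j - 1)) [1..<n+1] = percom_answer n \<sigma> \<tau>"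
  unfolding solves_percom_def by iprover

lemma solves_percom_cotD:
  "solves_percom_cot L H M n T \<Longrightarrow> perm_n n \<sigma> \<Longrightarrow> perm_n n \<tau> \<Longrightarrow>
   drop (T - n) (drop (2 * n) (cot_seq L H M (percom_input n \<sigma> \<tau>) T)) = percom_answer n \<sigma> \<tau>"
  unfolding solves_percom_cot_def by iprover

lemma perm_n_if_permutes: "\<sigma> permutes {1..n} \<Longrightarrow> perm_n n \<sigma>"
  by (simp add: perm_n_def permutes_imp_bij)

lemma perm_n_id: "perm_n n id"
  by (simp add: perm_n_def)

lemma percom_input_id: "percom_input n \<sigma> id = map \<sigma> [1..<n+1] @ [1..<n+1]"
  by (simp add: percom_input_def)

lemma percom_answer_id: "percom_answer n \<sigma> id = map \<sigma> [1..<n+1]"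
  by (simp add: percom_answer_def)

lemma not_solves_percom_if_states_after_eq:
  assumes "\<sigma> permutes {1..n}" "\<sigma>' permutes {1..n}" "map \<sigma> [1..<n+1] \<noteq> map \<sigma>' [1..<n+1]"
    and "states_after L H M (map \<sigma> [1..<n+1]) = states_after L H M (map \<sigma>' [1..<n+1])"
  shows "\<not> solves_percom L H M n"
proof
  assume solves: "solves_percom L H M n"
  have "rnn_output L H M (percom_input n \<sigma> id) i = rnn_output L H M (percom_input n \<sigma>' id) i"
    if "n \<le> i" for i
    unfolding percom_input_id using rnn_output_append_cong[OF assms(4)] that by simp
  then have "map (\<lambda>j. rnn_output L H M (percom_input n \<sigma> id) (n + j - 1)) [1..<n+1]
      = map (\<lambda>j. rnn_output L H M (percom_input n \<sigma>' id) (n + j - 1)) [1..<n+1]"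
    by (intro map_cong) auto
  moreover note solves_percomD[OF solves perm_n_if_permutes[OF assms(1)] perm_n_id]
    solves_percomD[OF solves perm_n_if_permutes[OF assms(2)] perm_n_id]
  ultimately show False
    using assms(3) unfolding percom_answer_id by simp
qed

lemma not_solves_percom_cot_if_states_after_eq:
  assumes "\<sigma> permutes {1..n}" "\<sigma>' permutes {1..n}" "map \<sigma> [1..<n+1] \<noteq> map \<sigma>' [1..<n+1]"
    and "states_after L H M (map \<sigma> [1..<n+1]) = states_after L H M (map \<sigma>' [1..<n+1])"
  shows "\<not> solves_percom_cot L H M n T"
proof
  assume solves: "solves_percom_cot L H M n T"
  have "n \<noteq> 0"
    using assms(3) by auto
  then obtain g where "cot_seq L H M (percom_input n \<sigma> id) T = map \<sigma> [1..<n+1] @ g"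
    "cot_seq L H M (percom_input n \<sigma>' id) T = map \<sigma>' [1..<n+1] @ g"
    using cot_seq_append_cong[OF assms(4), of "[1..<n+1]" T] unfolding percom_input_id by auto
  then have "drop (2 * n) (cot_seq L H M (percom_input n \<sigma> id) T)
      = drop (2 * n) (cot_seq L H M (percom_input n \<sigma>' id) T)"
    by simp
  moreover note solves_percom_cotD[OF solves perm_n_if_permutes[OF assms(1)] perm_n_id]
    solves_percom_cotD[OF solves perm_n_if_permutes[OF assms(2)] perm_n_id]
  ultimately show False
    using assms(3) unfolding percom_answer_id by simp
qed

lemma power_less_fact_if_less_log:
  assumes "real k < log 2 (fact n)"
  shows "2 ^ k < (fact n :: nat)"
proof -
  have "2 powr real k < fact n"
    using assms by (simp add: less_log_iff)
  then show ?thesis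
    by (metis of_nat_fact of_nat_less_iff of_nat_numeral of_nat_power powr_realpow zero_less_numeral)
qed

theorem theoremA7:
  fixes M :: "'v rnn" and L H m p n :: nat
  assumes "rnn_wf L H m p M"
    and "real (L * H * m * p) < log 2 (fact n)"
  shows "\<not> solves_percom L H M n \<and> (\<forall>T. \<not> solves_percom_cot L H M n T)"
proof -
  obtain \<sigma> \<sigma>' where "\<sigma> permutes {1..n}" "\<sigma>' permutes {1..n}"
    "map \<sigma> [1..<n+1] \<noteq> map \<sigma>' [1..<n+1]"
    "states_after L H M (map \<sigma> [1..<n+1]) = states_after L H M (map \<sigma>' [1..<n+1])"
    using indistinguishable_permutations[OF assms(1) power_less_fact_if_less_log[OF assms(2)]] .
  then show ?thesis
    using not_solves_percom_if_states_after_eq not_solves_percom_cot_if_states_after_eq by blast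
qed

end
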